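(* Let $N>0$, $\gamma>0$, $\mathcal{R}_0>0$, and let $(S,I,R):[0,\infty)\to\mathbb{R}^3$ be the solution of $$S'=-\frac{\gamma\mathcal{R}_0 SI}{N},\qquad I'=\frac{\gamma\mathcal{R}_0 SI}{N}-\gamma I,\qquad R'=\gamma I,$$ with initial data $S(0)>0$, $I(0)>0$, $R(0)\ge 0$, $S(0)+I(0)+R(0)=N$. Let $I_{\max}=\sup_{t\ge0}I(t)$, and let $M$ be a real number with $I(0)<M<S(0)+I(0)$. Suppose $\mathcal{R}_0\ge \frac{N}{S(0)}$. Then $I_{\max}\le M$ if and only if $$\mathcal{R}_0\le N\,\frac{W_{-1}\!\left(\frac{M-N+R(0)}{S(0)\,e}\right)}{M-N+R(0)}.$$
   Context: SIR epidemic model written with basic reproduction number $\mathcal{R}_0=\beta N/\gamma$; along solutions $S+I+R\equiv N$. $I_{\max}$ denotes the maximum (supremum) of $I(t)$ over $t\ge0$. $W_{-1}$ is the lower real branch of the Lambert $W$ function: for $x\in[-1/e,0)$, $W_{-1}(x)$ is the unique real $y\le -1$ with $ye^y=x$. (Under the hypotheses, $M-N+R(0)<0$ and the argument of $W_{-1}$ lies in $(-1/e,0)$.) *)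

theory Defs
  imports "HOL-Analysis.Analysis"
begin

text \<open>Lower real branch of the Lambert W function: for x in [-1/e, 0),
  the unique real y \<le> -1 with y * exp y = x.\<close>
definition lambertW_m1 :: "real \<Rightarrow> real" where
  "lambertW_m1 x = (THE y. y \<le> -1 \<and> y * exp y = x)"

end

theory Submission
  imports Defs
begin

text \<open>
  Along every solution, \<open>S exp (\<R>\<^sub>0 R / N)\<close> and \<open>S + I + R\<close> are conserved, so the
  trajectory lies on the phase curve \<open>I = I(0) + S(0) - S + (N/\<R>\<^sub>0) ln (S / S(0))\<close>.
  This is maximal at the threshold \<open>S = u = N/\<R>\<^sub>0\<close>, and \<open>S\<close>, starting at
  \<open>S(0) \<ge> u\<close>, must reach \<open>u\<close> (otherwise \<open>S' \<le> -\<gamma> I(0)\<close> forever), so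
  \<open>I\<^sub>m\<^sub>a\<^sub>x\<close> is the value of the phase curve at \<open>u\<close>. Substituting
  \<open>u = S(0) e\<^sup>y\<^sup>+\<^sup>1\<close> turns \<open>I\<^sub>m\<^sub>a\<^sub>x \<le> M\<close> into
  \<open>y e\<^sup>y \<le> (M - N + R(0)) / (S(0) e)\<close> with \<open>y \<le> -1\<close>, which is solved by the lower
  branch of the Lambert W function because \<open>y e\<^sup>y\<close> is decreasing on \<open>(-\<infinity>, -1]\<close>.
\<close>

lemma has_real_derivative_halfline_at:
  assumes "(g has_real_derivative D) (at t within {0..})" and "0 < t"
  shows "(g has_real_derivative D) (at t)"
proof -
  have "at t within {0..} = at t"
    by (rule at_within_interior) (use \<open>0 < t\<close> in \<open>simp add: interior_real_atLeast\<close>)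
  then show ?thesis
    using assms(1) by simp
qed

lemma continuous_on_halfline_if_has_real_derivative:
  fixes g :: "real \<Rightarrow> real"
  assumes "\<And>t. t \<ge> 0 \<Longrightarrow> (g has_real_derivative g' t) (at t within {0..})"
  shows "continuous_on {0..} g"
  unfolding continuous_on_eq_continuous_within using assms DERIV_continuous by blast

lemma halfline_MVT:
  fixes g :: "real \<Rightarrow> real"
  assumes d: "\<And>t. t \<ge> 0 \<Longrightarrow> (g has_real_derivative g' t) (at t within {0..})"
    and "0 \<le> a" "a < b"
  obtains z where "a < z" "z < b" "g b - g a = (b - a) * g' z"
proof -
  have "continuous_on {0..} g"
    using d by (rule continuous_on_halfline_if_has_real_derivative)
  then have "continuous_on {a..b} g"
    by (rule continuous_on_subset) (use \<open>0 \<le> a\<close> in auto)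
  moreover have deriv: "(g has_real_derivative g' x) (at x)" if "a < x" for x
    using has_real_derivative_halfline_at[OF d] that \<open>0 \<le> a\<close> by auto
  ultimately obtain l z where z: "a < z" "z < b" "(g has_real_derivative l) (at z)"
    "g b - g a = (b - a) * l"
    using MVT[OF \<open>a < b\<close>, of g] by (meson real_differentiable_def)
  moreover have "l = g' z"
    using DERIV_unique[OF z(3) deriv[OF z(1)]] .
  ultimately show ?thesis
    using that by blast
qed

lemma halfline_deriv_le_imp_le:
  fixes g :: "real \<Rightarrow> real"
  assumes d: "\<And>t. t \<ge> 0 \<Longrightarrow> (g has_real_derivative g' t) (at t within {0..})"
    and "0 \<le> a" "a \<le> b" and bound: "\<And>z. a < z \<Longrightarrow> z < b \<Longrightarrow> g' z \<le> D"
  shows "g b \<le> g a + (b - a) * D"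
proof (cases "a = b")
  case False
  then have "a < b"
    using \<open>a \<le> b\<close> by simp
  then obtain z where "a < z" "z < b" "g b - g a = (b - a) * g' z"
    using halfline_MVT[OF d \<open>0 \<le> a\<close>] by blast
  moreover have "(b - a) * g' z \<le> (b - a) * D"
    using bound \<open>a < z\<close> \<open>z < b\<close> by (intro mult_left_mono) auto
  ultimately show ?thesis by linarith
qed simp

lemma halfline_deriv_zero_imp_constant:
  fixes g :: "real \<Rightarrow> real"
  assumes "\<And>t. t \<ge> 0 \<Longrightarrow> (g has_real_derivative 0) (at t within {0..})" and "t \<ge> 0"
  shows "g t = g 0"
proof (cases "t = 0")
  case False
  then show ?thesis
    using halfline_MVT[of g "\<lambda>_. 0" 0 t] assms by force
qed simp

lemma positive_on_halfline_induct:
  fixes g :: "real \<Rightarrow> real"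
  assumes cont: "continuous_on {0..} g" and "g 0 > 0"
    and step: "\<And>t. 0 < t \<Longrightarrow> (\<And>s. 0 \<le> s \<Longrightarrow> s < t \<Longrightarrow> g s > 0) \<Longrightarrow> g t > 0"
    and "t \<ge> 0"
  shows "g t > 0"
proof (rule ccontr)
  assume "\<not> g t > 0"
  define A where "A = {0..t} \<inter> g -` {..0}"
  have "continuous_on {0..t} g"
    using cont by (rule continuous_on_subset) auto
  then have "closed A"
    unfolding A_def by (intro continuous_closed_preimage) auto
  moreover have "t \<in> A" "bdd_below A"
    using \<open>t \<ge> 0\<close> \<open>\<not> g t > 0\<close> unfolding A_def by (auto intro: bdd_belowI[of _ 0])
  ultimately have "Inf A \<in> A"
    using closed_contains_Inf by blast
  then have "0 \<le> Inf A" "g (Inf A) \<le> 0"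
    unfolding A_def by auto
  then have "0 < Inf A"
    using \<open>g 0 > 0\<close> by (cases "Inf A = 0") auto
  moreover have "g s > 0" if "0 \<le> s" "s < Inf A" for s
  proof (rule ccontr)
    assume "\<not> g s > 0"
    then have "s \<in> A"
      using that \<open>Inf A \<in> A\<close> unfolding A_def by auto
    then show False
      using cInf_lower[OF _ \<open>bdd_below A\<close>] \<open>s < Inf A\<close> by fastforce
  qed
  ultimately show False
    using step[of "Inf A"] \<open>g (Inf A) \<le> 0\<close> by fastforce
qed

lemma mult_ln_minus_le_tangent:
  fixes u x y :: real
  assumes "0 \<le> u" "0 < x" "0 < y"
  shows "u * ln y - y \<le> u * ln x - x + (y - x) * (u / x - 1)"
proof -
  have "ln y - ln x \<le> y / x - 1"
    using ln_le_minus_one[of "y / x"] assms by (simp add: ln_div)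
  then have "u * (ln y - ln x) \<le> u * (y / x - 1)"
    using \<open>0 \<le> u\<close> by (rule mult_left_mono)
  then show ?thesis
    using \<open>0 < x\<close> by (simp add: field_simps)
qed

lemma mult_exp_strict_antimono:
  fixes a b :: real
  assumes "a < b" "b \<le> -1"
  shows "b * exp b < a * exp a"
proof -
  have "((\<lambda>y. y * exp y) has_real_derivative (1 + x) * exp x) (at x)" for x :: real
    by (auto intro!: derivative_eq_intros simp: algebra_simps)
  then obtain z where z: "a < z" "z < b" "b * exp b - a * exp a = (b - a) * ((1 + z) * exp z)"
    using MVT2[OF \<open>a < b\<close>, of "\<lambda>y. y * exp y" "\<lambda>y. (1 + y) * exp y"] by blast
  have "(1 + z) * exp z < 0"
    using z assms by (simp add: mult_neg_pos)
  then have "(b - a) * ((1 + z) * exp z) < 0"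
    using \<open>a < b\<close> by (simp add: mult_pos_neg)
  then show ?thesis
    using z(3) by linarith
qed

lemma mult_exp_le_iff:
  fixes a b :: real
  assumes "a \<le> -1" "b \<le> -1"
  shows "a * exp a \<le> b * exp b \<longleftrightarrow> b \<le> a"
proof (cases a b rule: linorder_cases)
  case less
  then show ?thesis
    using mult_exp_strict_antimono[OF less assms(2)] by auto
next
  case greater
  then show ?thesis
    using mult_exp_strict_antimono[OF greater assms(1)] by auto
qed simp

lemma exists_le_minus_one_mult_exp_ge:
  fixes x :: real
  assumes "x < 0"
  obtains y where "y \<le> -1" "x \<le> y * exp y"
proof -
  have "eventually (\<lambda>z. z / exp z < - x) at_top"
    using order_tendstoD(2)[OF tendsto_power_div_exp_0[of 1]] assms by simp
  then obtain Z where Z: "\<And>z. z \<ge> Z \<Longrightarrow> z / exp z < - x"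
    unfolding eventually_at_top_linorder by blast
  define z where "z = max 1 Z"
  have "z / exp z < - x" "1 \<le> z"
    using Z[of z] unfolding z_def by auto
  moreover have "(- z) * exp (- z) = - (z / exp z)"
    by (simp add: exp_minus divide_inverse)
  ultimately show ?thesis
    using that[of "- z"] by linarith
qed

lemma lambertW_m1:
  fixes x :: real
  assumes "-1 / exp 1 \<le> x" "x < 0"
  shows "lambertW_m1 x \<le> -1" "lambertW_m1 x * exp (lambertW_m1 x) = x"
proof -
  obtain y where "y \<le> -1" "x \<le> y * exp y"
    using exists_le_minus_one_mult_exp_ge[OF \<open>x < 0\<close>] .
  moreover have "-1 * exp (-1) \<le> x"
    using assms(1) by (simp add: exp_minus divide_inverse)
  moreover have "continuous_on {y..-1} (\<lambda>y. y * exp y)"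
    by (intro continuous_intros)
  ultimately obtain w where w: "w \<le> -1" "w * exp w = x"
    using IVT2'[of "\<lambda>y. y * exp y" "-1" x y] by blast
  have "v = w" if "v \<le> -1" "v * exp v = x" for v
    using mult_exp_le_iff[OF that(1) w(1)] mult_exp_le_iff[OF w(1) that(1)] that(2) w(2)
    by (metis order.antisym order_refl)
  then have "lambertW_m1 x = w"
    unfolding lambertW_m1_def using w by (intro the_equality) blast+
  then show "lambertW_m1 x \<le> -1" "lambertW_m1 x * exp (lambertW_m1 x) = x"
    using w by simp_all
qed

lemma lambertW_m1_le_iff:
  fixes x y :: real
  assumes "-1 / exp 1 \<le> x" "x < 0" "y \<le> -1"
  shows "lambertW_m1 x \<le> y \<longleftrightarrow> y * exp y \<le> x"
  using mult_exp_le_iff[OF \<open>y \<le> -1\<close> lambertW_m1(1)[OF assms(1,2)]] lambertW_m1(2)[OF assms(1,2)]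
  by simp

lemma mult_ln_minus_one_le_iff_lambertW_m1:
  fixes s u K :: real
  assumes "0 < u" "u \<le> s" "- s \<le> K" "K < 0"
  shows "u * (ln (u / s) - 1) \<le> K \<longleftrightarrow> K / lambertW_m1 (K / (s * exp 1)) \<le> u"
proof -
  define x where "x = K / (s * exp 1)"
  define w where "w = lambertW_m1 x"
  define y where "y = ln (u / s) - 1"
  have "0 < s" "0 < s * exp 1"
    using assms by simp_all
  have "- 1 / exp 1 = - s / (s * exp 1)"
    using \<open>0 < s\<close> by simp
  also have "\<dots> \<le> x"
    unfolding x_def
    by (rule divide_right_mono) (use \<open>- s \<le> K\<close> \<open>0 < s * exp 1\<close> in simp_all)
  finally have x: "-1 / exp 1 \<le> x" "x < 0"
    unfolding x_def using \<open>K < 0\<close> \<open>0 < s * exp 1\<close> by (simp_all add: divide_neg_pos)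
  have w: "w \<le> -1" "w * exp w = x"
    unfolding w_def by (rule lambertW_m1[OF x])+
  have "y \<le> -1"
    unfolding y_def using assms \<open>0 < s\<close> by simp
  have u_eq: "u = s * exp 1 * exp y"
    unfolding y_def using assms \<open>0 < s\<close> by (simp add: exp_diff)
  have K_eq: "K = s * exp 1 * (w * exp w)"
    using w(2) \<open>0 < s\<close> unfolding x_def by simp
  have "u * y \<le> K \<longleftrightarrow> s * exp 1 * (y * exp y) \<le> s * exp 1 * x"
    unfolding u_eq x_def using \<open>0 < s\<close> by (simp add: ac_simps)
  also have "\<dots> \<longleftrightarrow> w \<le> y"
    using \<open>0 < s * exp 1\<close> lambertW_m1_le_iff[OF x \<open>y \<le> -1\<close>] unfolding w_def
    by (simp add: mult_le_cancel_left_pos)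
  also have "\<dots> \<longleftrightarrow> s * exp 1 * exp w \<le> u"
    unfolding u_eq using \<open>0 < s\<close> by simp
  also have "s * exp 1 * exp w = K / w"
    unfolding K_eq using w(1) by simp
  finally show ?thesis
    unfolding y_def w_def x_def .
qed

locale sir_model =
  fixes S I R :: "real \<Rightarrow> real" and N \<gamma> R\<^sub>0 :: real
  assumes N_pos: "N > 0" and gamma_pos: "\<gamma> > 0" and R0_pos: "R\<^sub>0 > 0"
    and dS: "\<And>t. t \<ge> 0 \<Longrightarrow>
      (S has_real_derivative (- \<gamma> * R\<^sub>0 * S t * I t / N)) (at t within {0..})"
    and dI: "\<And>t. t \<ge> 0 \<Longrightarrow>
      (I has_real_derivative (\<gamma> * R\<^sub>0 * S t * I t / N - \<gamma> * I t)) (at t within {0..})"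
    and dR: "\<And>t. t \<ge> 0 \<Longrightarrow>
      (R has_real_derivative (\<gamma> * I t)) (at t within {0..})"
    and S0_pos: "S 0 > 0" and I0_pos: "I 0 > 0"
begin

definition threshold :: real where
  "threshold = N / R\<^sub>0"

definition phase_curve :: "real \<Rightarrow> real" where
  "phase_curve x = I 0 + S 0 - x + threshold * ln (x / S 0)"

lemma threshold_pos: "threshold > 0"
  unfolding threshold_def using N_pos R0_pos by simp

lemma S_deriv:
  assumes "t \<ge> 0"
  shows "(S has_real_derivative (- \<gamma> * I t * (S t / threshold))) (at t within {0..})"
proof -
  have "- \<gamma> * R\<^sub>0 * S t * I t / N = - \<gamma> * I t * (S t / threshold)"
    unfolding threshold_def using N_pos R0_pos by (simp add: field_simps)
  with dS[OF assms] show ?thesis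
    by (simp only:)
qed

lemma S_continuous: "continuous_on {0..} S"
  using continuous_on_halfline_if_has_real_derivative[OF dS] .

lemma I_continuous: "continuous_on {0..} I"
  using continuous_on_halfline_if_has_real_derivative[OF dI] .

lemma population_constant:
  assumes "t \<ge> 0"
  shows "S t + I t + R t = S 0 + I 0 + R 0"
proof -
  have "((\<lambda>t. S t + I t + R t) has_real_derivative 0) (at s within {0..})" if "s \<ge> 0" for s
    using DERIV_add[OF DERIV_add[OF dS dI] dR, OF that that that] by simp
  from halfline_deriv_zero_imp_constant[OF this assms] show ?thesis by simp
qed

lemma S_exp_R_constant:
  assumes "t \<ge> 0"
  shows "S t * exp (R t / threshold) = S 0 * exp (R 0 / threshold)"
proof -
  have "((\<lambda>t. S t * exp (R t / threshold)) has_real_derivative 0) (at s within {0..})"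
    if "s \<ge> 0" for s
    using S_deriv[OF that] dR[OF that] threshold_pos
    by (auto intro!: derivative_eq_intros simp: field_simps)
  from halfline_deriv_zero_imp_constant[OF this assms] show ?thesis by simp
qed

lemma S_pos:
  assumes "t \<ge> 0"
  shows "S t > 0"
proof -
  have "S t * exp (R t / threshold) > 0"
    unfolding S_exp_R_constant[OF assms] using S0_pos by simp
  then show ?thesis
    by (simp add: zero_less_mult_iff)
qed

lemma I_eq_phase_curve:
  assumes "t \<ge> 0"
  shows "I t = phase_curve (S t)"
proof -
  have "S t / S 0 = exp ((R 0 - R t) / threshold)"
    using S_exp_R_constant[OF assms] S0_pos
    by (simp add: exp_diff diff_divide_distrib field_simps)
  then have "threshold * ln (S t / S 0) = R 0 - R t"
    using threshold_pos by simp
  then show ?thesis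
    using population_constant[OF assms] unfolding phase_curve_def by linarith
qed

lemma phase_curve_S0: "phase_curve (S 0) = I 0"
  using S0_pos unfolding phase_curve_def by simp

lemma phase_curve_eq:
  "x > 0 \<Longrightarrow> phase_curve x = I 0 + S 0 - threshold * ln (S 0) + (threshold * ln x - x)"
  unfolding phase_curve_def using S0_pos by (simp add: ln_div right_diff_distrib)

lemma phase_curve_le_phase_curve_threshold:
  "x > 0 \<Longrightarrow> phase_curve x \<le> phase_curve threshold"
  using mult_ln_minus_le_tangent[of threshold threshold x]
    phase_curve_eq[of x] phase_curve_eq[of threshold]
    threshold_pos
  by simp

lemma phase_curve_antimono:
  assumes "threshold \<le> x" "x \<le> y"
  shows "phase_curve y \<le> phase_curve x"
proof -
  have "(y - x) * (threshold / x - 1) \<le> 0"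
    using assms threshold_pos by (intro mult_nonneg_nonpos) (auto simp: field_simps)
  then show ?thesis
    using mult_ln_minus_le_tangent[of threshold x y] phase_curve_eq[of x] phase_curve_eq[of y]
      assms threshold_pos
    by simp
qed

lemma S_le_S0_while_infected:
  assumes "t \<ge> 0" and infected: "\<And>s. 0 < s \<Longrightarrow> s < t \<Longrightarrow> I s > 0"
  shows "S t \<le> S 0"
proof -
  have "- \<gamma> * I s * (S s / threshold) \<le> 0" if "0 < s" "s < t" for s
    using gamma_pos infected[OF that] S_pos[of s] threshold_pos that
    by (simp add: mult_nonneg_nonneg)
  then show ?thesis
    using halfline_deriv_le_imp_le[OF S_deriv, of 0 t 0] assms by simp
qed

lemma I_pos_if_S_above_threshold:
  assumes above: "\<And>t. t \<ge> 0 \<Longrightarrow> threshold < S t" and "t \<ge> 0"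
  shows "I t > 0"
  using I_continuous I0_pos _ \<open>t \<ge> 0\<close>
proof (rule positive_on_halfline_induct)
  fix t :: real
  assume "0 < t" and "\<And>s. 0 \<le> s \<Longrightarrow> s < t \<Longrightarrow> I s > 0"
  then have "S t \<le> S 0"
    by (intro S_le_S0_while_infected) auto
  then have "phase_curve (S 0) \<le> phase_curve (S t)"
    using above[of t] \<open>0 < t\<close> by (intro phase_curve_antimono) auto
  then show "I t > 0"
    using I_eq_phase_curve[of t] phase_curve_S0 I0_pos \<open>0 < t\<close> by simp
qed

text \<open>If \<open>S\<close> stayed above the threshold, \<open>I\<close> would stay above \<open>I(0)\<close> and
  \<open>S' \<le> -\<gamma> I(0)\<close> would drive \<open>S\<close> below the threshold by time \<open>T\<close>.\<close>
lemma S_reaches_threshold: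
  assumes "threshold \<le> S 0"
  obtains t where "t \<ge> 0" "S t = threshold"
proof -
  have "\<exists>t\<ge>0. S t = threshold"
  proof (rule ccontr)
    assume never: "\<not> (\<exists>t\<ge>0. S t = threshold)"
    have above: "threshold < S t" if "t \<ge> 0" for t
    proof (rule ccontr)
      assume "\<not> threshold < S t"
      moreover have "continuous_on {0..t} S"
        using S_continuous by (rule continuous_on_subset) auto
      ultimately have "\<exists>z. 0 \<le> z \<and> z \<le> t \<and> S z = threshold"
        using assms that by (intro IVT2') simp_all
      then show False
        using never by blast
    qed
    have I_ge: "I 0 \<le> I t" if "t \<ge> 0" for t
    proof -
      have "S t \<le> S 0"
        using S_le_S0_while_infected[OF that] I_pos_if_S_above_threshold[OF above] by simp
      then have "phase_curve (S 0) \<le> phase_curve (S t)"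
        by (rule phase_curve_antimono[rotated]) (use above[OF that] in simp)
      then show ?thesis
        using I_eq_phase_curve[OF that] phase_curve_S0 by simp
    qed
    define T where "T = (S 0 - threshold) / (\<gamma> * I 0)"
    have "T \<ge> 0"
      unfolding T_def using assms gamma_pos I0_pos by simp
    have "- \<gamma> * I z * (S z / threshold) \<le> - \<gamma> * I 0" if "0 < z" for z
    proof -
      have "1 \<le> S z / threshold"
        using above[of z] that threshold_pos by simp
      then have "I 0 * 1 \<le> I z * (S z / threshold)"
        using I_ge[of z] that I0_pos by (intro mult_mono) simp_all
      then have "\<gamma> * (I 0 * 1) \<le> \<gamma> * (I z * (S z / threshold))"
        using gamma_pos by (intro mult_left_mono) simp_all
      then show ?thesis
        by (simp add: mult.assoc)
    qed
    then have "S T \<le> S 0 + (T - 0) * (- \<gamma> * I 0)"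
      using \<open>T \<ge> 0\<close> by (intro halfline_deriv_le_imp_le[OF S_deriv]) simp_all
    also have "\<dots> = threshold"
      unfolding T_def using gamma_pos I0_pos by simp
    finally show False
      using above[OF \<open>T \<ge> 0\<close>] by simp
  qed
  then show ?thesis
    using that by blast
qed

lemma Sup_I_eq_phase_curve_threshold:
  assumes "threshold \<le> S 0"
  shows "Sup (I ` {0..}) = phase_curve threshold"
proof (rule cSup_eq_maximum)
  obtain t where "t \<ge> 0" "S t = threshold"
    using S_reaches_threshold[OF assms] .
  then show "phase_curve threshold \<in> I ` {0..}"
    using I_eq_phase_curve by force
next
  fix y
  assume "y \<in> I ` {0..}"
  then show "y \<le> phase_curve threshold"
    using I_eq_phase_curve S_pos phase_curve_le_phase_curve_threshold by auto
qed

end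

theorem proposition2:
  fixes S I R :: "real \<Rightarrow> real" and N \<gamma> R\<^sub>0 M :: real
  assumes N_pos: "N > 0" and gamma_pos: "\<gamma> > 0" and R0_pos: "R\<^sub>0 > 0"
    and dS: "\<And>t. t \<ge> 0 \<Longrightarrow>
      (S has_real_derivative (- \<gamma> * R\<^sub>0 * S t * I t / N)) (at t within {0..})"
    and dI: "\<And>t. t \<ge> 0 \<Longrightarrow>
      (I has_real_derivative (\<gamma> * R\<^sub>0 * S t * I t / N - \<gamma> * I t)) (at t within {0..})"
    and dR: "\<And>t. t \<ge> 0 \<Longrightarrow>
      (R has_real_derivative (\<gamma> * I t)) (at t within {0..})"
    and S0: "S 0 > 0" and I0: "I 0 > 0" and R0: "R 0 \<ge> 0"
    and sum0: "S 0 + I 0 + R 0 = N"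
    and M_bounds: "I 0 < M" "M < S 0 + I 0"
    and R0_ge: "R\<^sub>0 \<ge> N / S 0"
  shows "(Sup (I ` {0..}) \<le> M) \<longleftrightarrow>
    R\<^sub>0 \<le> N * lambertW_m1 ((M - N + R 0) / (S 0 * exp 1)) / (M - N + R 0)"
proof -
  interpret sir_model S I R N \<gamma> R\<^sub>0
    by unfold_locales (use assms in auto)
  define K where "K = M - N + R 0"
  define W where "W = lambertW_m1 (K / (S 0 * exp 1))"
  have threshold: "0 < threshold" "threshold \<le> S 0"
    using threshold_pos R0_ge S0 R0_pos by (auto simp: threshold_def field_simps)
  have K: "- S 0 \<le> K" "K < 0"
    unfolding K_def using M_bounds sum0 by auto
  have "W < 0"
    unfolding W_def using lambertW_m1(1)[of "K / (S 0 * exp 1)"] K S0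
    by (simp add: field_simps)
  have "Sup (I ` {0..}) \<le> M \<longleftrightarrow> threshold * (ln (threshold / S 0) - 1) \<le> K"
    unfolding Sup_I_eq_phase_curve_threshold[OF threshold(2)] phase_curve_def K_def using sum0
    by (auto simp: algebra_simps)
  also have "\<dots> \<longleftrightarrow> K / W \<le> N / R\<^sub>0"
    unfolding W_def using mult_ln_minus_one_le_iff_lambertW_m1[OF threshold K]
    by (simp add: threshold_def)
  also have "\<dots> \<longleftrightarrow> R\<^sub>0 \<le> N * W / K"
    using K \<open>W < 0\<close> R0_pos N_pos by (simp add: field_simps)
  finally show ?thesis
    unfolding K_def W_def .
qed

end
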